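(* Let $\alpha=(\alpha_1,\ldots,\alpha_m)$ be a partition of $n$ and $r\ge 1$ an integer. Then $$\mathbf{C}_{\alpha}(\mathbf{z})\circ p_1^r=\mathbf{C}_{\alpha^r}(\mathbf{z}),$$ where $\alpha^r$ is the partition of $nr$ containing exactly $r$ copies of each part of $\alpha$, and $\circ$ denotes plethysm.
   Context: For a partition $\alpha$ of $n$ let $\sigma_\alpha\in S_n$ be any permutation of cycle type $\alpha$ and $o(\sigma_\alpha)$ its order. The cyclic symmetric function of the first kind is $\mathbf{C}_\alpha(\mathbf{z})=\frac{1}{o(\sigma_\alpha)}\sum_{g\in\langle\sigma_\alpha\rangle}p_{\lambda(g)}$, where $\lambda(g)$ is the cycle type of $g$ and $p_\lambda$ is the power-sum symmetric function (this is the cycle index series of the molecular species $X^n/\langle\sigma_\alpha\rangle$). Plethysm with $p_1^r$: $f\circ p_1^r$ is obtained from $f$ (written in power sums) by substituting $p_k\mapsto p_k^r$ for all $k$. *)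

theory Defs
  imports Complex_Main "HOL-Library.Multiset" "HOL-Combinatorics.Permutations" "HOL-Combinatorics.Orbits"
begin

text \<open>Symmetric functions of homogeneous degree are represented by their coordinates in the
  power-sum basis: a function mapping each partition (a multiset of positive naturals) lambda to
  the coefficient of p_lambda.  (Only finitely many coefficients are nonzero.)\<close>

type_synonym symfun = "nat multiset \<Rightarrow> rat"

definition is_partition :: "nat \<Rightarrow> nat multiset \<Rightarrow> bool" where
  "is_partition n \<alpha> \<longleftrightarrow> (\<forall>k \<in># \<alpha>. 0 < k) \<and> sum_mset \<alpha> = n"

definition cycle_type :: "nat \<Rightarrow> (nat \<Rightarrow> nat) \<Rightarrow> nat multiset" where
  "cycle_type n g = image_mset card (mset_set ((\<lambda>x. orbit g x) ` {..<n}))"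

definition cyc_gp :: "(nat \<Rightarrow> nat) \<Rightarrow> (nat \<Rightarrow> nat) set" where
  "cyc_gp \<sigma> = {\<sigma> ^^ k | k. True}"

definition perm_order :: "(nat \<Rightarrow> nat) \<Rightarrow> nat" where
  "perm_order \<sigma> = card (cyc_gp \<sigma>)"

text \<open>Cyclic symmetric function of the first kind, C = (1/o(sigma)) * sum over g in <sigma> of
  p_(cycle type of g), in power-sum coordinates.\<close>
definition cyclic_C :: "nat \<Rightarrow> (nat \<Rightarrow> nat) \<Rightarrow> symfun" where
  "cyclic_C n \<sigma> = (\<lambda>\<mu>. (\<Sum>g\<in>cyc_gp \<sigma>. if cycle_type n g = \<mu> then 1 else 0) / of_nat (perm_order \<sigma>))"

text \<open>Plethysm with p_1^r: substitute p_k := p_k^r, which sends p_lambda to p_(lambda^r),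
  lambda^r = r copies of each part.  Coefficientwise: collect all lambda mapping to mu.\<close>
definition plethysm_p1_pow :: "symfun \<Rightarrow> nat \<Rightarrow> symfun" where
  "plethysm_p1_pow f r = (\<lambda>\<mu>. \<Sum>la\<in>{la. repeat_mset r la = \<mu> \<and> f la \<noteq> 0}. f la)"

end

theory Submission
  imports Defs "HOL-Combinatorics.Cycles"
begin

(* On a cycle of length d of g, the power g^k is conjugate to the rotation i \<mapsto> i + k of Z/d,
   so the cycle type of g^k arises from that of g by replacing each part d with a multiset that
   depends only on d and k.  Hence cycle_type (tau^k) consists of r copies of cycle_type (sigma^k)
   for every k.  In particular sigma^k = id iff tau^k = id, so sigma^k \<mapsto> tau^k is a
   well-defined bijection from <sigma> onto <tau>; it sends each term p_(lambda(g)) of C_alpha to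
   p_(lambda(g)^r), which is what the substitution p_k \<mapsto> p_k^r does to it. *)

definition cycle_type_on :: "'a set \<Rightarrow> ('a \<Rightarrow> 'a) \<Rightarrow> nat multiset" where
  "cycle_type_on A h = image_mset card (mset_set (orbit h ` A))"

lemma cycle_type_eq_cycle_type_on: "cycle_type n g = cycle_type_on {..<n} g"
  by (simp add: cycle_type_def cycle_type_on_def)

lemma orbit_subset_invariant:
  assumes "h ` A \<subseteq> A" "x \<in> A"
  shows "orbit h x \<subseteq> A"
proof
  fix y assume "y \<in> orbit h x"
  then show "y \<in> A" by induction (use assms in auto)
qed

lemma funpow_image_subset: "h ` A \<subseteq> A \<Longrightarrow> (h ^^ k) ` A \<subseteq> A"
  by (induction k) auto

lemma cycle_type_on_Un:
  assumes "finite A" "finite B" "A \<inter> B = {}" "h ` A \<subseteq> A" "h ` B \<subseteq> B"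
  shows "cycle_type_on (A \<union> B) h = cycle_type_on A h + cycle_type_on B h"
proof -
  have "orbit h ` A \<inter> orbit h ` B = {}"
    using assms(3) orbit_subset_invariant[OF assms(4)] orbit_subset_invariant[OF assms(5)]
      orbit_nonempty by fastforce
  then show ?thesis
    by (simp add: cycle_type_on_def image_Un mset_set_Union assms(1,2))
qed

lemma cycle_type_on_Union:
  assumes "finite F" "disjoint F" "\<And>B. B \<in> F \<Longrightarrow> finite B \<and> h ` B \<subseteq> B"
  shows "cycle_type_on (\<Union>F) h = (\<Sum>B\<in>F. cycle_type_on B h)"
  using assms
proof (induction F rule: finite_induct)
  case empty
  then show ?case by (simp add: cycle_type_on_def)
next
  case (insert B F)
  have "B \<inter> \<Union>F = {}"
    using insert.hyps(2) insert.prems(1) by (fastforce simp: pairwise_insert disjnt_def)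
  moreover have "h ` \<Union>F \<subseteq> \<Union>F"
    using insert.prems(2) by blast
  ultimately have "cycle_type_on (B \<union> \<Union>F) h = cycle_type_on B h + cycle_type_on (\<Union>F) h"
    using insert by (intro cycle_type_on_Un) auto
  then show ?case
    using insert by (simp add: pairwise_insert)
qed

lemma cycle_type_on_conj:
  assumes "bij_betw \<phi> A B" "h ` A \<subseteq> A" "\<And>x. x \<in> A \<Longrightarrow> x \<in> orbit h x"
    and "\<And>x. x \<in> A \<Longrightarrow> h' (\<phi> x) = \<phi> (h x)"
  shows "cycle_type_on B h' = cycle_type_on A h"
proof -
  have inj: "inj_on \<phi> A" and B: "B = \<phi> ` A"
    using assms(1) by (auto simp: bij_betw_def)
  have orbits: "orbit h' (\<phi> x) = \<phi> ` orbit h x" if "x \<in> A" for x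
    using orbit_inverse[of x h h' \<phi>] assms(3,4) orbit_subset_invariant[OF assms(2) that] that
    by auto
  have "orbit h' ` B = image \<phi> ` orbit h ` A"
    unfolding B image_image using orbits by auto
  moreover have "inj_on (image \<phi>) (orbit h ` A)"
    by (rule inj_on_image, rule inj_on_subset[OF inj]) (use orbit_subset_invariant[OF assms(2)] in auto)
  ultimately have "mset_set (orbit h' ` B) = image_mset (image \<phi>) (mset_set (orbit h ` A))"
    by (simp add: image_mset_mset_set)
  then have "cycle_type_on B h' = image_mset (\<lambda>C. card (\<phi> ` C)) (mset_set (orbit h ` A))"
    by (simp add: cycle_type_on_def multiset.map_comp o_def)
  also have "\<dots> = cycle_type_on A h"
  proof -
    have "card (\<phi> ` C) = card C" if "C \<in> orbit h ` A" for C
      using that orbit_subset_invariant[OF assms(2)] by (auto intro!: card_image inj_on_subset[OF inj])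
    then show ?thesis
      unfolding cycle_type_on_def
      by (cases "finite (orbit h ` A)") (auto intro!: image_mset_cong)
  qed
  finally show ?thesis .
qed

definition rotation :: "nat \<Rightarrow> nat \<Rightarrow> nat \<Rightarrow> nat" where
  "rotation d k i = (i + k) mod d"

(* It consists of gcd d k cycles of length d div gcd d k; this value is never needed. *)
definition rotation_cycle_type :: "nat \<Rightarrow> nat \<Rightarrow> nat multiset" where
  "rotation_cycle_type k d = cycle_type_on {..<d} (rotation d k)"

lemma funpow_rotation: "i < d \<Longrightarrow> (rotation d k ^^ m) i = (i + m * k) mod d"
  by (induction m) (simp_all add: rotation_def mod_add_right_eq ac_simps)

lemma self_in_orbit_rotation: "i < d \<Longrightarrow> i \<in> orbit (rotation d k) i"
  using funpow_rotation[where m = d] by (auto simp: orbit_altdef intro!: exI[of _ d])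

lemma cycle_type_on_orbit_funpow:
  assumes "permutation g"
  shows "cycle_type_on (orbit g x) (g ^^ k) = rotation_cycle_type k (card (orbit g x))"
proof -
  define d where "d = funpow_dist1 g x x"
  define \<phi> where "\<phi> = (\<lambda>i. (g ^^ i) x)"
  have x: "x \<in> orbit g x"
    using assms by (rule permutation_self_in_orbit)
  have bij: "bij_betw \<phi> {..<d} (orbit g x)"
    using orbit_conv_funpow_dist1[OF x] inj_on_funpow_dist1[OF x]
    by (simp add: bij_betw_def \<phi>_def d_def atLeast0LessThan)
  have period: "(g ^^ d) x = x"
    unfolding d_def by (rule funpow_dist1_prop[OF x])
  have "(g ^^ k) (\<phi> i) = \<phi> (rotation d k i)" for i
  proof -
    have "(g ^^ k) (\<phi> i) = (g ^^ (i + k)) x"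
      by (simp add: \<phi>_def add.commute[of i k] funpow_add)
    also have "\<dots> = \<phi> (rotation d k i)"
      by (simp add: \<phi>_def rotation_def funpow_mod_eq[OF period])
    finally show ?thesis .
  qed
  then have "cycle_type_on (orbit g x) (g ^^ k) = cycle_type_on {..<d} (rotation d k)"
    by (intro cycle_type_on_conj[OF bij]) (auto simp: rotation_def self_in_orbit_rotation)
  moreover have "card (orbit g x) = d"
    using bij_betw_same_card[OF bij] by simp
  ultimately show ?thesis
    by (simp add: rotation_cycle_type_def)
qed

lemma disjoint_orbits:
  assumes "permutation g"
  shows "disjoint (orbit g ` A)"
proof -
  have "orbit g y = orbit g x" if "y \<in> orbit g x" for x y
    using cyclic_on_orbit'[OF assms] that by (rule orbit_cyclic_eq3)
  then show ?thesis
    unfolding pairwise_def disjnt_def by blast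
qed

lemma cycle_type_on_funpow:
  assumes "permutation g" "finite A" "g ` A \<subseteq> A"
  shows "cycle_type_on A (g ^^ k) = sum_mset (image_mset (rotation_cycle_type k) (cycle_type_on A g))"
proof -
  have A: "\<Union>(orbit g ` A) = A"
    using orbit_subset_invariant[OF assms(3)] permutation_self_in_orbit[OF assms(1)] by blast
  have "cycle_type_on (\<Union>(orbit g ` A)) (g ^^ k) = (\<Sum>C\<in>orbit g ` A. cycle_type_on C (g ^^ k))"
  proof (rule cycle_type_on_Union)
    show "finite (orbit g ` A)"
      using assms(2) by simp
    show "disjoint (orbit g ` A)"
      using assms(1) by (rule disjoint_orbits)
    fix C assume "C \<in> orbit g ` A"
    then obtain x where "x \<in> A" "C = orbit g x"
      by blast
    moreover have "g ` orbit g x \<subseteq> orbit g x"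
      by (auto intro: orbit.step)
    ultimately show "finite C \<and> (g ^^ k) ` C \<subseteq> C"
      using orbit_subset_invariant[OF assms(3)] assms(2) finite_subset funpow_image_subset by metis
  qed
  then have "cycle_type_on A (g ^^ k) = (\<Sum>C\<in>orbit g ` A. cycle_type_on C (g ^^ k))"
    unfolding A .
  also have "\<dots> = (\<Sum>C\<in>orbit g ` A. rotation_cycle_type k (card C))"
    using cycle_type_on_orbit_funpow[OF assms(1)] by (auto intro!: sum.cong)
  also have "\<dots> = sum_mset (image_mset (rotation_cycle_type k) (cycle_type_on A g))"
    by (simp add: sum_unfold_sum_mset cycle_type_on_def multiset.map_comp o_def)
  finally show ?thesis .
qed

lemma cycle_type_funpow:
  assumes "g permutes {..<n}"
  shows "cycle_type n (g ^^ k) = sum_mset (image_mset (rotation_cycle_type k) (cycle_type n g))"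
  using assms unfolding cycle_type_eq_cycle_type_on
  by (intro cycle_type_on_funpow) (auto simp: permutation_permutes permutes_image)

lemma set_mset_cycle_type: "set_mset (cycle_type n g) = (\<lambda>x. card (orbit g x)) ` {..<n}"
  by (auto simp: cycle_type_def)

lemma permutes_eq_id_iff_cycle_type:
  assumes "g permutes {..<n}"
  shows "g = id \<longleftrightarrow> set_mset (cycle_type n g) \<subseteq> {1}"
proof -
  have "permutation g"
    using assms by (auto simp: permutation_permutes)
  then have "card (orbit g x) = 1 \<longleftrightarrow> g x = x" for x
    using permutation_self_in_orbit[of g x] orbit_eq_singleton_iff[of g x]
    by (auto simp: card_1_singleton_iff)
  moreover have "g = id \<longleftrightarrow> (\<forall>x<n. g x = x)"
    using permutes_not_in[OF assms] by (auto simp: fun_eq_iff)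
  ultimately show ?thesis
    by (auto simp: set_mset_cycle_type)
qed

lemma set_mset_repeat_mset: "0 < r \<Longrightarrow> set_mset (repeat_mset r M) = set_mset M"
  by (auto simp flip: count_greater_zero_iff)

lemma sum_mset_image_mset_repeat_mset:
  "sum_mset (image_mset f (repeat_mset r M)) = repeat_mset r (sum_mset (image_mset f M))"
  by (induction r) auto

lemma funpow_eq_funpow_iff:
  assumes "inj f" "i \<le> j"
  shows "f ^^ j = f ^^ i \<longleftrightarrow> f ^^ (j - i) = id"
proof
  assume "f ^^ j = f ^^ i"
  then show "f ^^ (j - i) = id"
    using funpow_diff[OF assms] by (auto simp: fun_eq_iff)
next
  assume "f ^^ (j - i) = id"
  then show "f ^^ j = f ^^ i"
    using funpow_add[of "j - i" i f] assms(2) by simp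
qed

lemma cyc_gp_bij_betw:
  assumes "inj f" "inj g" "\<And>k. f ^^ k = id \<longleftrightarrow> g ^^ k = id"
  obtains \<phi> where "bij_betw \<phi> (cyc_gp f) (cyc_gp g)" "\<And>k. \<phi> (f ^^ k) = g ^^ k"
proof -
  have same_eqs: "f ^^ i = f ^^ j \<longleftrightarrow> g ^^ i = g ^^ j" for i j
    using funpow_eq_funpow_iff[OF assms(1)] funpow_eq_funpow_iff[OF assms(2)] assms(3)
    by (cases "i \<le> j") (metis, metis nat_le_linear)
  define \<phi> where "\<phi> h = g ^^ (SOME k. h = f ^^ k)" for h
  have \<phi>: "\<phi> (f ^^ k) = g ^^ k" for k
  proof -
    have "f ^^ k = f ^^ (SOME k'. f ^^ k = f ^^ k')"
      by (rule someI) (rule refl)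
    then show ?thesis
      unfolding \<phi>_def using same_eqs by metis
  qed
  have "cyc_gp h = range (\<lambda>k. h ^^ k)" for h
    by (auto simp: cyc_gp_def)
  then have "bij_betw \<phi> (cyc_gp f) (cyc_gp g)"
    unfolding bij_betw_def inj_on_def using \<phi> same_eqs by (auto simp: image_image)
  with \<phi> show ?thesis
    using that by blast
qed

lemma plethysm_p1_pow_repeat_mset:
  assumes "0 < r"
  shows "plethysm_p1_pow f r (repeat_mset r \<nu>) = f \<nu>"
proof -
  have "{\<kappa>. repeat_mset r \<kappa> = repeat_mset r \<nu> \<and> f \<kappa> \<noteq> 0} = (if f \<nu> = 0 then {} else {\<nu>})"
    using assms by (auto simp: repeat_mset_cancel1)
  then show ?thesis
    by (simp add: plethysm_p1_pow_def)
qed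

lemma plethysm_p1_pow_eq_0:
  assumes "\<mu> \<notin> range (repeat_mset r)"
  shows "plethysm_p1_pow f r \<mu> = 0"
proof -
  have "{\<kappa>. repeat_mset r \<kappa> = \<mu> \<and> f \<kappa> \<noteq> 0} = {}"
    using assms by auto
  then show ?thesis
    by (simp add: plethysm_p1_pow_def)
qed

lemma plethysm_p1_pow_cyclic_C:
  assumes "0 < r" "bij_betw \<phi> (cyc_gp \<sigma>) (cyc_gp \<tau>)"
    and "\<And>g. g \<in> cyc_gp \<sigma> \<Longrightarrow> cycle_type m (\<phi> g) = repeat_mset r (cycle_type n g)"
  shows "plethysm_p1_pow (cyclic_C n \<sigma>) r = cyclic_C m \<tau>"
proof
  fix \<mu>
  have "(\<Sum>g\<in>cyc_gp \<tau>. if cycle_type m g = \<mu> then 1 else 0)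
      = (\<Sum>g\<in>cyc_gp \<sigma>. if cycle_type m (\<phi> g) = \<mu> then 1 else (0::rat))"
    by (rule sum.reindex_bij_betw[OF assms(2), symmetric])
  also have "\<dots> = (\<Sum>g\<in>cyc_gp \<sigma>. if repeat_mset r (cycle_type n g) = \<mu> then 1 else 0)"
    using assms(3) by (intro sum.cong) auto
  finally have "cyclic_C m \<tau> \<mu>
      = (\<Sum>g\<in>cyc_gp \<sigma>. if repeat_mset r (cycle_type n g) = \<mu> then 1 else 0) / of_nat (perm_order \<sigma>)"
    using bij_betw_same_card[OF assms(2)] by (simp add: cyclic_C_def perm_order_def)
  then show "plethysm_p1_pow (cyclic_C n \<sigma>) r \<mu> = cyclic_C m \<tau> \<mu>"
    using assms(1)
    by (cases "\<mu> \<in> range (repeat_mset r)")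
      (auto simp: plethysm_p1_pow_repeat_mset plethysm_p1_pow_eq_0 cyclic_C_def repeat_mset_cancel1
        intro!: sum.neutral)
qed

theorem mainTheorem2:
  fixes n r :: nat and \<alpha> :: "nat multiset" and \<sigma> \<tau> :: "nat \<Rightarrow> nat"
  assumes "is_partition n \<alpha>" and "1 \<le> r"
    and "\<sigma> permutes {..<n}" and "cycle_type n \<sigma> = \<alpha>"
    and "\<tau> permutes {..<n * r}" and "cycle_type (n * r) \<tau> = repeat_mset r \<alpha>"
  shows "plethysm_p1_pow (cyclic_C n \<sigma>) r = cyclic_C (n * r) \<tau>"
proof -
  have r: "0 < r"
    using assms(2) by simp
  have powers: "cycle_type (n * r) (\<tau> ^^ k) = repeat_mset r (cycle_type n (\<sigma> ^^ k))" for k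
    using cycle_type_funpow[OF assms(3)] cycle_type_funpow[OF assms(5)] assms(4,6)
    by (simp add: sum_mset_image_mset_repeat_mset)
  have "\<sigma> ^^ k = id \<longleftrightarrow> \<tau> ^^ k = id" for k
    using permutes_eq_id_iff_cycle_type[OF permutes_funpow[OF assms(3)]]
      permutes_eq_id_iff_cycle_type[OF permutes_funpow[OF assms(5)]]
    by (simp add: powers set_mset_repeat_mset r)
  then obtain \<phi> where \<phi>: "bij_betw \<phi> (cyc_gp \<sigma>) (cyc_gp \<tau>)" "\<And>k. \<phi> (\<sigma> ^^ k) = \<tau> ^^ k"
    using cyc_gp_bij_betw permutes_inj assms(3,5) by metis
  show ?thesis
  proof (rule plethysm_p1_pow_cyclic_C[OF r \<phi>(1)])
    fix g assume "g \<in> cyc_gp \<sigma>"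
    then show "cycle_type (n * r) (\<phi> g) = repeat_mset r (cycle_type n g)"
      using powers \<phi>(2) by (auto simp: cyc_gp_def)
  qed
qed

end
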